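(* Let $\mathbf{A}$ be a finite ordered metric space and $p$ a partial isomorphism of $\mathbf{A}$. Let $\mathbf{B}$ be a finite metric space containing $\mathbf{A}$ as a metric subspace, and let $q$ be a partial isometry of $\mathbf{B}$ extending $p$ with $\mathrm{Per}(q)=\mathrm{Fix}(q)$. Suppose that for all $x\in\mathrm{dom}(q)$: $q(x)\in\mathbf{A}$ if and only if $x\in\mathrm{dom}(p)$. Then there is a linear order on $\mathbf{B}$ extending the order of $\mathbf{A}$ such that $q$ is a partial isomorphism of the resulting ordered metric space $\mathbf{B}$.
   Context: An ordered metric space is a triple $(A,d,<)$ with $d$ a metric on $A$ and $<$ a linear order on $A$. A partial isometry of a metric space is an isometry between finite subsets of it; a partial isomorphism of an ordered metric space is a partial isometry that also preserves the order on its domain. $\mathrm{Fix}(q)=\{x\in\mathrm{dom}(q):q(x)=x\}$; $x\in\mathrm{dom}(q)$ is periodic if there is $n>0$ with $x,q(x),\dots,q^n(x)$ all defined and $q^n(x)=x$, and $\mathrm{Per}(q)$ is the set of periodic points. *)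

theory Defs
  imports Complex_Main
begin

definition metric_on :: "'a set \<Rightarrow> ('a \<Rightarrow> 'a \<Rightarrow> real) \<Rightarrow> bool" where
  "metric_on M d \<longleftrightarrow>
     (\<forall>x\<in>M. \<forall>y\<in>M. d x y \<ge> 0 \<and> (d x y = 0 \<longleftrightarrow> x = y) \<and> d x y = d y x) \<and>
     (\<forall>x\<in>M. \<forall>y\<in>M. \<forall>z\<in>M. d x z \<le> d x y + d y z)"

definition lin_order_on :: "'a set \<Rightarrow> ('a \<times> 'a) set \<Rightarrow> bool" where
  "lin_order_on M r \<longleftrightarrow> r \<subseteq> M \<times> M \<and> trans r \<and> irrefl r \<and> total_on M r"

definition partial_isometry :: "'a set \<Rightarrow> ('a \<Rightarrow> 'a \<Rightarrow> real) \<Rightarrow> ('a \<rightharpoonup> 'a) \<Rightarrow> bool" where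
  "partial_isometry M d q \<longleftrightarrow> finite (dom q) \<and> dom q \<subseteq> M \<and> ran q \<subseteq> M \<and>
     (\<forall>x\<in>dom q. \<forall>y\<in>dom q. d (the (q x)) (the (q y)) = d x y)"

definition partial_iso :: "'a set \<Rightarrow> ('a \<Rightarrow> 'a \<Rightarrow> real) \<Rightarrow> ('a \<times> 'a) set \<Rightarrow> ('a \<rightharpoonup> 'a) \<Rightarrow> bool" where
  "partial_iso M d r q \<longleftrightarrow> partial_isometry M d q \<and>
     (\<forall>x\<in>dom q. \<forall>y\<in>dom q. (x, y) \<in> r \<longleftrightarrow> (the (q x), the (q y)) \<in> r)"

fun pmap_pow :: "('a \<rightharpoonup> 'a) \<Rightarrow> nat \<Rightarrow> 'a \<rightharpoonup> 'a" where
  "pmap_pow q 0 x = Some x"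
| "pmap_pow q (Suc n) x = (case pmap_pow q n x of None \<Rightarrow> None | Some y \<Rightarrow> q y)"

definition Fix :: "('a \<rightharpoonup> 'a) \<Rightarrow> 'a set" where
  "Fix q = {x \<in> dom q. q x = Some x}"

definition Per :: "('a \<rightharpoonup> 'a) \<Rightarrow> 'a set" where
  "Per q = {x \<in> dom q. \<exists>n>0. pmap_pow q n x = Some x}"

end

theory Submission imports Defs begin

(*
  Induction on the number of points of B outside A.  If A = B then q = p and the
  order of A already works.  Otherwise one point b of B - A is added to A, the order and the
  partial isomorphism p are extended to insert b A so that all hypotheses hold again, and the
  induction hypothesis finishes the proof.

  The point b must be "good": every q-preimage of b lies in A or is b itself.  Such a point
  exists since otherwise, following q-preimages backwards inside the finite set B - A, one runs
  into a cycle of length > 1, i.e. a periodic point that is not fixed (this is where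
  Per q = Fix q is used).  As q is injective, a good b has at most one preimage x, and the new
  partial isomorphism is p(x |-> b).  The point b is inserted into the order of A at a cut:
  if x lies in A, at the cut that mirrors, through p, the position of x relative to dom p;
  otherwise (x = b, or no preimage at all) at the top.
*)

lemma partial_isometry_inj:
  assumes m: "metric_on B d" and q: "partial_isometry B d q"
  shows "inj_on q (dom q)"
proof (rule inj_onI)
  fix x y assume x: "x \<in> dom q" and y: "y \<in> dom q" and eq: "q x = q y"
  have B: "x \<in> B" "y \<in> B" "the (q x) \<in> B"
    using q x y unfolding partial_isometry_def ran_def by auto
  have "d (the (q x)) (the (q y)) = d x y" using q x y unfolding partial_isometry_def by blast
  then have "d x y = d (the (q x)) (the (q x))" using eq by metis
  also have "\<dots> = 0" using m B(3) unfolding metric_on_def by blast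
  finally show "x = y" using m B(1,2) unfolding metric_on_def by blast
qed

lemma partial_isometry_submap:
  assumes q: "partial_isometry B d q" and pq: "p \<subseteq>\<^sub>m q"
    and "dom p \<subseteq> A" and "ran p \<subseteq> A"
  shows "partial_isometry A d p"
proof -
  have dom: "dom p \<subseteq> dom q" using pq by (rule map_le_implies_dom_le)
  have agree: "x \<in> dom p \<Longrightarrow> p x = q x" for x using pq unfolding map_le_def by auto
  have "finite (dom p)" using q dom finite_subset unfolding partial_isometry_def by blast
  moreover have "\<forall>x\<in>dom p. \<forall>y\<in>dom p. d (the (p x)) (the (p y)) = d x y"
    using q dom agree unfolding partial_isometry_def by (metis subsetD)
  ultimately show ?thesis using assms(3,4) unfolding partial_isometry_def by blast
qed

lemma order_preserving_inj:
  assumes "irrefl r" "total_on A r" "dom p \<subseteq> A"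
    and ord: "\<forall>x\<in>dom p. \<forall>y\<in>dom p. (x, y) \<in> r \<longleftrightarrow> (the (p x), the (p y)) \<in> r"
  shows "inj_on p (dom p)"
proof (rule inj_onI)
  fix x y assume x: "x \<in> dom p" and y: "y \<in> dom p" and eq: "p x = p y"
  show "x = y"
  proof (rule ccontr)
    assume "x \<noteq> y"
    then have "(x, y) \<in> r \<or> (y, x) \<in> r" using assms(2,3) x y unfolding total_on_def by auto
    then show False using ord x y eq assms(1) unfolding irrefl_def by auto
  qed
qed

lemma lin_order_flip:
  assumes "lin_order_on A r" "x \<in> A" "y \<in> A" "x \<noteq> y"
  shows "(x, y) \<in> r \<longleftrightarrow> (y, x) \<notin> r"
  using assms unfolding lin_order_on_def total_on_def irrefl_def trans_def by blast

section \<open>Inserting a new point into a linear order\<close>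

definition down_closed :: "('a \<times> 'a) set \<Rightarrow> 'a set \<Rightarrow> bool" where
  "down_closed r L \<longleftrightarrow> (\<forall>a\<in>L. \<forall>a'. (a', a) \<in> r \<longrightarrow> a' \<in> L)"

definition ins_cut :: "'a set \<Rightarrow> ('a \<times> 'a) set \<Rightarrow> 'a set \<Rightarrow> 'a \<Rightarrow> ('a \<times> 'a) set" where
  "ins_cut A r L b = r \<union> (L \<times> {b}) \<union> ({b} \<times> (A - L))"

lemma ins_cut_new_point:
  assumes "r \<subseteq> A \<times> A" "b \<notin> A" "L \<subseteq> A" "a \<in> A"
  shows "(a, b) \<in> ins_cut A r L b \<longleftrightarrow> a \<in> L"
    and "(b, a) \<in> ins_cut A r L b \<longleftrightarrow> a \<notin> L"
  using assms unfolding ins_cut_def by auto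

lemma ins_cut_restrict:
  assumes "r \<subseteq> A \<times> A" "b \<notin> A"
  shows "ins_cut A r L b \<inter> (A \<times> A) = r"
  using assms unfolding ins_cut_def by auto

lemma ins_cut_lin_order:
  assumes lo: "lin_order_on A r" and bA: "b \<notin> A" and LA: "L \<subseteq> A" and down: "down_closed r L"
  shows "lin_order_on (insert b A) (ins_cut A r L b)"
proof -
  have r: "r \<subseteq> A \<times> A" "trans r" "irrefl r" "total_on A r"
    using lo unfolding lin_order_on_def by auto
  let ?r = "ins_cut A r L b"
  have "trans ?r"
  proof (rule transI)
    fix x y z assume xy: "(x, y) \<in> ?r" and yz: "(y, z) \<in> ?r"
    consider "(x, y) \<in> r" "(y, z) \<in> r" | "(x, y) \<in> r" "y \<in> L" "z = b"
      | "x \<in> L" "y = b" "z \<in> A - L" | "x = b" "y \<in> A - L" "(y, z) \<in> r"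
      using xy yz r(1) bA LA unfolding ins_cut_def by blast
    then show "(x, z) \<in> ?r"
    proof cases
      case 1 then show ?thesis using r(2) unfolding ins_cut_def by (meson UnI1 transD)
    next
      case 2 then show ?thesis using down r(1) unfolding ins_cut_def down_closed_def by auto
    next
      case 3
      then have "x \<noteq> z" "x \<in> A" "z \<in> A" using LA by auto
      then have "(x, z) \<in> r \<or> (z, x) \<in> r" using r(4) unfolding total_on_def by blast
      then show ?thesis using 3 down unfolding ins_cut_def down_closed_def by auto
    next
      case 4 then show ?thesis using down r(1) unfolding ins_cut_def down_closed_def by auto
    qed
  qed
  moreover have "irrefl ?r" using r(3) bA LA unfolding irrefl_def ins_cut_def by auto
  moreover have "total_on (insert b A) ?r" using r(4) unfolding total_on_def ins_cut_def by auto
  moreover have "?r \<subseteq> insert b A \<times> insert b A" using r(1) LA unfolding ins_cut_def by auto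
  ultimately show ?thesis unfolding lin_order_on_def by auto
qed

lemma matching_cut:
  assumes lo: "lin_order_on A r" and domp: "dom p \<subseteq> A" and ranp: "ran p \<subseteq> A"
    and ord: "\<forall>x\<in>dom p. \<forall>y\<in>dom p. (x, y) \<in> r \<longleftrightarrow> (the (p x), the (p y)) \<in> r"
  obtains L where "L \<subseteq> A" "down_closed r L" "\<forall>y\<in>dom p. the (p y) \<in> L \<longleftrightarrow> (y, x0) \<in> r"
proof -
  have r: "r \<subseteq> A \<times> A" "trans r" "irrefl r" "total_on A r"
    using lo unfolding lin_order_on_def by auto
  have inj: "inj_on p (dom p)" using order_preserving_inj[OF r(3,4) domp ord] .
  have pA: "the (p y) \<in> A" if "y \<in> dom p" for y
    using that ranp unfolding ran_def by auto
  define L where "L = {a\<in>A. \<exists>y\<in>dom p. (y, x0) \<in> r \<and> (a = the (p y) \<or> (a, the (p y)) \<in> r)}"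
  have "down_closed r L"
    unfolding down_closed_def L_def using r(1,2) by (auto dest: transD)
  moreover have "the (p y) \<in> L \<longleftrightarrow> (y, x0) \<in> r" if y: "y \<in> dom p" for y
  proof
    assume "the (p y) \<in> L"
    then obtain y' where y': "y' \<in> dom p" "(y', x0) \<in> r"
      and le: "the (p y) = the (p y') \<or> (the (p y), the (p y')) \<in> r"
      unfolding L_def by auto
    have "y = y' \<or> (y, y') \<in> r"
      using le ord y y' inj unfolding inj_on_def by (metis domD option.sel)
    then show "(y, x0) \<in> r" using y'(2) r(2) by (metis transD)
  qed (use y pA in \<open>auto simp: L_def\<close>)
  moreover have "L \<subseteq> A" unfolding L_def by blast
  ultimately show thesis using that by blast
qed

lemma order_preserving_upd:
  assumes irr: "irrefl R" and xp: "x \<notin> dom p"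
    and ord: "\<forall>u\<in>dom p. \<forall>v\<in>dom p. (u, v) \<in> R \<longleftrightarrow> (the (p u), the (p v)) \<in> R"
    and compat: "\<forall>y\<in>dom p. ((x, y) \<in> R \<longleftrightarrow> (b, the (p y)) \<in> R) \<and>
                            ((y, x) \<in> R \<longleftrightarrow> (the (p y), b) \<in> R)"
  shows "\<forall>u\<in>dom (p(x \<mapsto> b)). \<forall>v\<in>dom (p(x \<mapsto> b)).
           (u, v) \<in> R \<longleftrightarrow> (the ((p(x \<mapsto> b)) u), the ((p(x \<mapsto> b)) v)) \<in> R"
  using assms unfolding irrefl_def by auto

lemma compatible_cut:
  assumes lo: "lin_order_on A rA" and domp: "dom p \<subseteq> A" and ranp: "ran p \<subseteq> A"
    and ord: "\<forall>x\<in>dom p. \<forall>y\<in>dom p. (x, y) \<in> rA \<longleftrightarrow> (the (p x), the (p y)) \<in> rA"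
    and bA: "b \<notin> A" and xp: "x \<notin> dom p" and xA': "x \<in> insert b A"
  obtains L where "L \<subseteq> A" "down_closed rA L"
    "\<forall>y\<in>dom p. ((x, y) \<in> ins_cut A rA L b \<longleftrightarrow> (b, the (p y)) \<in> ins_cut A rA L b) \<and>
                ((y, x) \<in> ins_cut A rA L b \<longleftrightarrow> (the (p y), b) \<in> ins_cut A rA L b)"
proof -
  have rA: "rA \<subseteq> A \<times> A" using lo unfolding lin_order_on_def by blast
  have pA: "y \<in> dom p \<Longrightarrow> the (p y) \<in> A" for y using ranp unfolding ran_def by auto
  show thesis
  proof (cases "x \<in> A")
    case xA: True
    obtain L where L: "L \<subseteq> A" "down_closed rA L"
      and match: "\<forall>y\<in>dom p. the (p y) \<in> L \<longleftrightarrow> (y, x) \<in> rA"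
      by (rule matching_cut[OF lo domp ranp ord])
    have "((x, y) \<in> ins_cut A rA L b \<longleftrightarrow> (b, the (p y)) \<in> ins_cut A rA L b) \<and>
          ((y, x) \<in> ins_cut A rA L b \<longleftrightarrow> (the (p y), b) \<in> ins_cut A rA L b)"
      if y: "y \<in> dom p" for y
    proof -
      have yA: "y \<in> A" using y domp by blast
      have "(x, y) \<in> ins_cut A rA L b \<longleftrightarrow> (x, y) \<in> rA"
        and "(y, x) \<in> ins_cut A rA L b \<longleftrightarrow> (y, x) \<in> rA"
        using ins_cut_restrict[OF rA bA, of L] xA yA by blast+
      moreover have "(x, y) \<in> rA \<longleftrightarrow> (y, x) \<notin> rA"
        using lin_order_flip[OF lo xA yA] y xp by blast
      ultimately show ?thesis
        using match y ins_cut_new_point[OF rA bA L(1) pA[OF y]] by blast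
    qed
    then show ?thesis using that[OF L] by blast
  next
    case False
    then have x: "x = b" using xA' by blast
    have top: "down_closed rA A" using rA unfolding down_closed_def by blast
    have "((x, y) \<in> ins_cut A rA A b \<longleftrightarrow> (b, the (p y)) \<in> ins_cut A rA A b) \<and>
          ((y, x) \<in> ins_cut A rA A b \<longleftrightarrow> (the (p y), b) \<in> ins_cut A rA A b)"
      if y: "y \<in> dom p" for y
      using ins_cut_new_point[OF rA bA subset_refl] pA[OF y] y domp x by blast
    then show ?thesis using that[OF subset_refl top] by blast
  qed
qed

section \<open>Existence of a good point\<close>

lemma pmap_pow_backward:
  assumes g: "\<And>c. c \<in> C \<Longrightarrow> g c \<in> C \<and> q (g c) = Some c"
  shows "c \<in> C \<Longrightarrow> pmap_pow q k ((g ^^ k) c) = Some c"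
proof (induction k arbitrary: c)
  case (Suc k)
  have "pmap_pow q k ((g ^^ k) (g c)) = Some (g c)" using Suc g by blast
  then show ?case using g[OF Suc.prems] by (simp add: funpow_Suc_right del: funpow.simps)
qed simp

lemma good_point_exists:
  assumes fB: "finite B" and AB: "A \<subseteq> B" "A \<noteq> B" and domq: "dom q \<subseteq> B"
    and inj: "inj_on q (dom q)" and PF: "Per q = Fix q"
  shows "\<exists>b\<in>B - A. \<forall>x. q x = Some b \<longrightarrow> x \<in> A \<or> x = b"
proof (rule ccontr)
  let ?C = "B - A"
  assume "\<not> ?thesis"
  then have "\<forall>c\<in>?C. \<exists>x. x \<in> ?C \<and> q x = Some c \<and> x \<noteq> c" using domq by blast
  then obtain g where g: "\<And>c. c \<in> ?C \<Longrightarrow> g c \<in> ?C \<and> q (g c) = Some c \<and> g c \<noteq> c" by metis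
  have gC: "c \<in> ?C \<Longrightarrow> (g ^^ n) c \<in> ?C" for n c by (induction n) (use g in auto)
  obtain c where c: "c \<in> ?C" using AB by auto
  have "\<not> inj_on (\<lambda>n. (g ^^ n) c) {..card ?C}"
  proof
    assume "inj_on (\<lambda>n. (g ^^ n) c) {..card ?C}"
    moreover have "(\<lambda>n. (g ^^ n) c) ` {..card ?C} \<subseteq> ?C" using gC c by auto
    ultimately have "card {..card ?C} \<le> card ?C" using fB by (meson card_inj_on_le finite_Diff)
    then show False by simp
  qed
  then obtain i j where ij: "i < j" "(g ^^ i) c = (g ^^ j) c"
    unfolding inj_on_def by (metis linorder_neqE_nat)
  define u where "u = (g ^^ i) c"
  have uC: "u \<in> ?C" using gC c u_def by blast
  have "(g ^^ (j - i)) u = u"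
    using ij unfolding u_def by (metis comp_apply funpow_add less_imp_le_nat le_add_diff_inverse2)
  then have "pmap_pow q (j - i) u = Some u"
    using pmap_pow_backward[of ?C g q, OF _ uC, of "j - i"] g by simp
  moreover obtain j' where j': "j = Suc j'" using ij by (cases j) auto
  then have "u \<in> dom q" using g gC[OF c, of j'] ij(2) u_def by auto
  ultimately have "u \<in> Per q" unfolding Per_def using ij(1) zero_less_diff by blast
  then have "q u = Some u" using PF unfolding Fix_def by auto
  moreover have "q (g u) = Some u" "g u \<noteq> u" "g u \<in> dom q" using g uC by auto
  ultimately show False using inj unfolding inj_on_def by (metis domI)
qed

section \<open>Extending by one good point\<close>

lemma one_point_extension:
  assumes m: "metric_on B d" and qi: "partial_isometry B d q"
    and lo: "lin_order_on A rA"
    and pi: "partial_iso A d rA p" and pq: "p \<subseteq>\<^sub>m q"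
    and cond: "\<forall>x\<in>dom q. the (q x) \<in> A \<longleftrightarrow> x \<in> dom p"
    and bBA: "b \<in> B - A" and good: "\<forall>x. q x = Some b \<longrightarrow> x \<in> A \<or> x = b"
  shows "\<exists>R p'. lin_order_on (insert b A) R \<and> R \<inter> (A \<times> A) = rA \<and>
           partial_iso (insert b A) d R p' \<and> p' \<subseteq>\<^sub>m q \<and>
           (\<forall>x\<in>dom q. the (q x) \<in> insert b A \<longleftrightarrow> x \<in> dom p')"
proof -
  have rA: "rA \<subseteq> A \<times> A" using lo unfolding lin_order_on_def by auto
  have domp: "dom p \<subseteq> A" and ranp: "ran p \<subseteq> A"
    and ord: "\<forall>x\<in>dom p. \<forall>y\<in>dom p. (x, y) \<in> rA \<longleftrightarrow> (the (p x), the (p y)) \<in> rA"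
    using pi unfolding partial_iso_def partial_isometry_def by blast+
  have bA: "b \<notin> A" using bBA by auto
  have inj: "inj_on q (dom q)" using partial_isometry_inj[OF m qi] .
  have pA: "y \<in> dom p \<Longrightarrow> the (p y) \<in> A" for y using ranp unfolding ran_def by auto
  have cut_order: "lin_order_on (insert b A) (ins_cut A rA L b)"
      "ins_cut A rA L b \<inter> (A \<times> A) = rA"
      "\<forall>x\<in>dom p. \<forall>y\<in>dom p. (x, y) \<in> ins_cut A rA L b \<longleftrightarrow>
                               (the (p x), the (p y)) \<in> ins_cut A rA L b"
    if "L \<subseteq> A" "down_closed rA L" for L
  proof -
    show "lin_order_on (insert b A) (ins_cut A rA L b)" by (rule ins_cut_lin_order[OF lo bA that])
    show restr: "ins_cut A rA L b \<inter> (A \<times> A) = rA" by (rule ins_cut_restrict[OF rA bA])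
    show "\<forall>x\<in>dom p. \<forall>y\<in>dom p. (x, y) \<in> ins_cut A rA L b \<longleftrightarrow>
                               (the (p x), the (p y)) \<in> ins_cut A rA L b"
      using ord domp pA restr by blast
  qed
  show ?thesis
  proof (cases "\<exists>x. q x = Some b")
    case False
    have "partial_isometry (insert b A) d p"
      using domp ranp by (intro partial_isometry_submap[OF qi pq]) auto
    moreover have "\<forall>x\<in>dom q. the (q x) \<in> insert b A \<longleftrightarrow> x \<in> dom p"
      using cond False by (metis domD insert_iff option.sel)
    moreover have "down_closed rA A" using rA unfolding down_closed_def by blast
    ultimately show ?thesis using cut_order[OF subset_refl] pq unfolding partial_iso_def
      by (intro exI[of _ "ins_cut A rA A b"] exI[of _ p]) blast
  next
    case True
    then obtain x where qx: "q x = Some b" by auto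
    have xp: "x \<notin> dom p" using cond qx bA by force
    have x_unique: "q z = Some b \<Longrightarrow> z = x" for z using inj qx unfolding inj_on_def by (metis domI)
    have xA': "x \<in> insert b A" using good qx by blast
    obtain L where L: "L \<subseteq> A" "down_closed rA L"
      and compat: "\<forall>y\<in>dom p. ((x, y) \<in> ins_cut A rA L b \<longleftrightarrow> (b, the (p y)) \<in> ins_cut A rA L b) \<and>
                              ((y, x) \<in> ins_cut A rA L b \<longleftrightarrow> (the (p y), b) \<in> ins_cut A rA L b)"
      by (rule compatible_cut[OF lo domp ranp ord bA xp xA'])
    define p' where "p' = p(x \<mapsto> b)"
    have dom': "dom p' = insert x (dom p)" and ran': "ran p' = insert b (ran p)"
      using xp unfolding p'_def by (auto simp: ran_map_upd domIff)
    have p'q: "p' \<subseteq>\<^sub>m q" using pq qx unfolding p'_def map_le_def by auto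
    have "partial_isometry (insert b A) d p'"
      using domp ranp good qx by (intro partial_isometry_submap[OF qi p'q]) (auto simp: dom' ran')
    moreover have "\<forall>u\<in>dom p'. \<forall>v\<in>dom p'. (u, v) \<in> ins_cut A rA L b \<longleftrightarrow>
                    (the (p' u), the (p' v)) \<in> ins_cut A rA L b"
    proof -
      have "irrefl (ins_cut A rA L b)"
        using cut_order(1)[OF L] unfolding lin_order_on_def by blast
      from order_preserving_upd[OF this xp cut_order(3)[OF L] compat] show ?thesis
        unfolding p'_def .
    qed
    moreover have "the (q z) \<in> insert b A \<longleftrightarrow> z \<in> dom p'" if z: "z \<in> dom q" for z
    proof (cases "q z = Some b")
      case True
      then show ?thesis using x_unique dom' by simp
    next
      case False
      then have "the (q z) \<noteq> b" using z by auto
      moreover have "z \<noteq> x" using False qx by auto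
      ultimately show ?thesis using cond z dom' by simp
    qed
    ultimately show ?thesis using cut_order(1,2)[OF L] p'q unfolding partial_iso_def
      by (intro exI[of _ "ins_cut A rA L b"] exI[of _ p']) blast
  qed
qed

lemma extend_order_to_superset:
  assumes fB: "finite B" and m: "metric_on B d" and qi: "partial_isometry B d q"
    and PF: "Per q = Fix q"
  shows "A \<subseteq> B \<Longrightarrow> lin_order_on A rA \<Longrightarrow> partial_iso A d rA p \<Longrightarrow> p \<subseteq>\<^sub>m q
    \<Longrightarrow> (\<forall>x\<in>dom q. the (q x) \<in> A \<longleftrightarrow> x \<in> dom p)
    \<Longrightarrow> \<exists>rB. lin_order_on B rB \<and> rB \<inter> (A \<times> A) = rA \<and> partial_iso B d rB q"
proof (induction "card (B - A)" arbitrary: A rA p rule: less_induct)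
  case less
  note AB = less.prems(1) and lo = less.prems(2) and pi = less.prems(3)
    and pq = less.prems(4) and cond = less.prems(5)
  have domq: "dom q \<subseteq> B" and ranq: "ran q \<subseteq> B" using qi unfolding partial_isometry_def by auto
  show ?case
  proof (cases "A = B")
    case True
    text \<open>Every point of dom q is mapped into A, hence lies in dom p: q = p.\<close>
    have "q \<subseteq>\<^sub>m p"
      unfolding map_le_def using cond ranq pq True
      by (metis domD map_le_def option.sel ranI subsetD)
    then have "q = p" using map_le_antisym[OF pq] by simp
    then show ?thesis using lo pi True unfolding lin_order_on_def by auto
  next
    case False
    obtain b where b: "b \<in> B - A" "\<forall>x. q x = Some b \<longrightarrow> x \<in> A \<or> x = b"
      using good_point_exists[OF fB AB False domq partial_isometry_inj[OF m qi] PF] by blast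
    obtain R p' where R: "lin_order_on (insert b A) R" "R \<inter> (A \<times> A) = rA"
      "partial_iso (insert b A) d R p'" "p' \<subseteq>\<^sub>m q"
      "\<forall>x\<in>dom q. the (q x) \<in> insert b A \<longleftrightarrow> x \<in> dom p'"
      using one_point_extension[OF m qi lo pi pq cond b] by blast
    have "card (B - insert b A) < card (B - A)"
      using b(1) fB by (intro psubset_card_mono) auto
    then obtain rB where rB: "lin_order_on B rB" "rB \<inter> (insert b A \<times> insert b A) = R"
      "partial_iso B d rB q"
      using less.hyps[OF _ _ R(1,3,4,5)] AB b(1) by blast
    have "rB \<inter> (A \<times> A) = rA" using rB(2) R(2) by blast
    then show ?thesis using rB by blast
  qed
qed

theorem proposition4p6:
  fixes A B :: "'a set" and d :: "'a \<Rightarrow> 'a \<Rightarrow> real" and rA :: "('a \<times> 'a) set"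
    and p q :: "'a \<rightharpoonup> 'a"
  assumes "finite A" and "lin_order_on A rA"
    and "finite B" and "A \<subseteq> B" and "metric_on B d"
    and "partial_iso A d rA p"
    and "partial_isometry B d q" and "p \<subseteq>\<^sub>m q"
    and "Per q = Fix q"
    and "\<forall>x\<in>dom q. the (q x) \<in> A \<longleftrightarrow> x \<in> dom p"
  shows "\<exists>rB. lin_order_on B rB \<and> rB \<inter> (A \<times> A) = rA \<and> partial_iso B d rB q"
  using extend_order_to_superset[OF assms(3,5,7,9) assms(4,2,6,8,10)] .

end
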